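(* Let $k\ge 0$. For every $k$-essential multicontext $C$ there is a $k$-correct multicontext $C'$ equivalent to $C$.
   Context: Let $\Sigma$ be a finite alphabet, $1\notin\Sigma$ a separator, $\Sigma_1=\Sigma\cup\{1\}$, $\mathrm{rk}(w)=|w|_1$ for $w\in\Sigma_1^*$; for $\mathrm{rk}(u)\ge j$, $u\odot_j v$ replaces the $j$-th occurrence of $1$ in $u$ by $v$; these operations extend elementwise to sets of words. Let $N$ be a set of nonterminals, each with a rank in $\mathbb{N}$, and let there be countably many variables of each rank. Multicontexts (with ranks) are built from nonterminals and variables (their rank), words of $\Sigma^*$ (rank $0$) and $1$ (rank $1$) by $(\alpha\cdot\beta)$ of rank $\mathrm{rk}\alpha+\mathrm{rk}\beta$ and $(\alpha\odot_j\beta)$, $j\ge1$, allowed when $\mathrm{rk}\alpha\ge j$, of rank $\mathrm{rk}\alpha+\mathrm{rk}\beta-1$. Submulticontexts are the subterms (nodes of the syntactic tree). A multicontext is $k$-correct if every submulticontext has rank at most $k$; it is $k$-essential if its own rank and the ranks of all variables and nonterminals occurring in it are less than $k$. A multicontext is ground if it contains no nonterminals. Two ground multicontexts with variables $x_1,\dots,x_t$ are equivalent if for every valuation $\mu$ assigning to each variable of rank $r$ a set of words of $\Sigma_1^*$ of rank $r$, their values (interpreting $\cdot$ as concatenation and $\odot_j$ as intercalation, elementwise on sets) coincide. Two arbitrary multicontexts $\alpha_1,\alpha_2$ are equivalent if $\alpha_1=D_1[A_1,\dots,A_s]$ and $\alpha_2=D_2[A_1,\dots,A_s]$ for some nonterminals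 $A_1,\dots,A_s$ and some equivalent ground multicontexts $D_1,D_2$ (where $D[A_1,\dots,A_s]$ means substituting $A_i$ for the $i$-th of $s$ fresh variables). *)

theory Defs
  imports Main
begin

text \<open>Letters of Sigma_1 = Sigma plus the separator 1 (here Sep).\<close>
datatype 'a sym = Letter 'a | Sep

definition rk_word :: "'a sym list \<Rightarrow> nat" where
  "rk_word w = length (filter (\<lambda>c. c = Sep) w)"

text \<open>u odot_j v: replace the j-th occurrence of Sep in u by v (j counted from 1).\<close>
fun intercal :: "nat \<Rightarrow> 'a sym list \<Rightarrow> 'a sym list \<Rightarrow> 'a sym list" where
  "intercal j [] v = []"
| "intercal j (Sep # u) v = (if j = 1 then v @ u else Sep # intercal (j - 1) u v)"
| "intercal j (Letter a # u) v = Letter a # intercal j u v"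

text \<open>Multicontexts. A variable is Var r i: the i-th variable of rank r.
  Nonterminals have type 'n, their ranks are given by a function rho.\<close>
datatype ('a, 'n) mc =
    NT 'n
  | Var nat nat
  | Word "'a list"
  | One
  | Cat "('a, 'n) mc" "('a, 'n) mc"
  | Ins nat "('a, 'n) mc" "('a, 'n) mc"

fun rk :: "('n \<Rightarrow> nat) \<Rightarrow> ('a, 'n) mc \<Rightarrow> nat" where
  "rk \<rho> (NT A) = \<rho> A"
| "rk \<rho> (Var r i) = r"
| "rk \<rho> (Word w) = 0"
| "rk \<rho> One = 1"
| "rk \<rho> (Cat a b) = rk \<rho> a + rk \<rho> b"
| "rk \<rho> (Ins j a b) = rk \<rho> a + rk \<rho> b - 1"

fun wf_mc :: "('n \<Rightarrow> nat) \<Rightarrow> ('a, 'n) mc \<Rightarrow> bool" where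
  "wf_mc \<rho> (Cat a b) = (wf_mc \<rho> a \<and> wf_mc \<rho> b)"
| "wf_mc \<rho> (Ins j a b) = (1 \<le> j \<and> j \<le> rk \<rho> a \<and> wf_mc \<rho> a \<and> wf_mc \<rho> b)"
| "wf_mc \<rho> _ = True"

fun subterms :: "('a, 'n) mc \<Rightarrow> ('a, 'n) mc set" where
  "subterms (Cat a b) = insert (Cat a b) (subterms a \<union> subterms b)"
| "subterms (Ins j a b) = insert (Ins j a b) (subterms a \<union> subterms b)"
| "subterms c = {c}"

fun vars :: "('a, 'n) mc \<Rightarrow> (nat \<times> nat) set" where
  "vars (Var r i) = {(r, i)}"
| "vars (Cat a b) = vars a \<union> vars b"
| "vars (Ins j a b) = vars a \<union> vars b"
| "vars _ = {}"

fun nts :: "('a, 'n) mc \<Rightarrow> 'n set" where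
  "nts (NT A) = {A}"
| "nts (Cat a b) = nts a \<union> nts b"
| "nts (Ins j a b) = nts a \<union> nts b"
| "nts _ = {}"

definition k_correct :: "('n \<Rightarrow> nat) \<Rightarrow> nat \<Rightarrow> ('a, 'n) mc \<Rightarrow> bool" where
  "k_correct \<rho> k C \<longleftrightarrow> wf_mc \<rho> C \<and> (\<forall>D \<in> subterms C. rk \<rho> D \<le> k)"

definition k_essential :: "('n \<Rightarrow> nat) \<Rightarrow> nat \<Rightarrow> ('a, 'n) mc \<Rightarrow> bool" where
  "k_essential \<rho> k C \<longleftrightarrow> wf_mc \<rho> C \<and> rk \<rho> C < k
     \<and> (\<forall>v \<in> vars C. fst v < k) \<and> (\<forall>A \<in> nts C. \<rho> A < k)"

definition ground :: "('a, 'n) mc \<Rightarrow> bool" where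
  "ground C \<longleftrightarrow> nts C = {}"

definition valuation :: "(nat \<Rightarrow> nat \<Rightarrow> 'a sym list set) \<Rightarrow> bool" where
  "valuation \<mu> \<longleftrightarrow> (\<forall>r i. \<forall>w \<in> \<mu> r i. rk_word w = r)"

fun eval :: "(nat \<Rightarrow> nat \<Rightarrow> 'a sym list set) \<Rightarrow> ('a, 'n) mc \<Rightarrow> 'a sym list set" where
  "eval \<mu> (NT A) = {}"
| "eval \<mu> (Var r i) = \<mu> r i"
| "eval \<mu> (Word w) = {map Letter w}"
| "eval \<mu> One = {[Sep]}"
| "eval \<mu> (Cat a b) = {u @ v | u v. u \<in> eval \<mu> a \<and> v \<in> eval \<mu> b}"
| "eval \<mu> (Ins j a b) = {intercal j u v | u v. u \<in> eval \<mu> a \<and> v \<in> eval \<mu> b}"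

definition ground_equiv :: "('n \<Rightarrow> nat) \<Rightarrow> ('a, 'n) mc \<Rightarrow> ('a, 'n) mc \<Rightarrow> bool" where
  "ground_equiv \<rho> D1 D2 \<longleftrightarrow> wf_mc \<rho> D1 \<and> wf_mc \<rho> D2 \<and> ground D1 \<and> ground D2
     \<and> (\<forall>\<mu>. valuation \<mu> \<longrightarrow> eval \<mu> D1 = eval \<mu> D2)"

fun subst :: "(nat \<times> nat \<Rightarrow> 'n option) \<Rightarrow> ('a, 'n) mc \<Rightarrow> ('a, 'n) mc" where
  "subst \<sigma> (Var r i) = (case \<sigma> (r, i) of Some A \<Rightarrow> NT A | None \<Rightarrow> Var r i)"
| "subst \<sigma> (Cat a b) = Cat (subst \<sigma> a) (subst \<sigma> b)"
| "subst \<sigma> (Ins j a b) = Ins j (subst \<sigma> a) (subst \<sigma> b)"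
| "subst \<sigma> c = c"

definition mc_equiv :: "('n \<Rightarrow> nat) \<Rightarrow> ('a, 'n) mc \<Rightarrow> ('a, 'n) mc \<Rightarrow> bool" where
  "mc_equiv \<rho> C1 C2 \<longleftrightarrow> (\<exists>\<sigma> D1 D2.
      (\<forall>v A. \<sigma> v = Some A \<longrightarrow> \<rho> A = fst v)
    \<and> ground_equiv \<rho> D1 D2 \<and> C1 = subst \<sigma> D1 \<and> C2 = subst \<sigma> D2)"

end

theory Submission
  imports Defs
begin

text \<open>A ground multicontext evaluates like a concatenation of words, separators and variables
  whose separators are filled by such concatenations, and intercalation can be pushed into this
  normal form. A normal form is turned back into a multicontext by concatenating its items and
  by filling the holes of each variable one at a time, those with arguments of rank 0 first:
  then every intermediate rank is bounded by the rank of the variable or by the rank of the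
  result, both less than k for a k-essential multicontext. Nonterminals are first replaced by
  fresh variables of the same ranks, which are substituted back at the end.\<close>

lemma rk_word_simps [simp]:
  "rk_word [] = 0"
  "rk_word (Sep # u) = Suc (rk_word u)"
  "rk_word (Letter a # u) = rk_word u"
  "rk_word (u @ v) = rk_word u + rk_word v"
  "rk_word (map Letter w) = 0"
  by (auto simp: rk_word_def filter_map comp_def)

lemma intercal_append:
  "1 \<le> j \<Longrightarrow> intercal j (u @ w) v =
     (if j \<le> rk_word u then intercal j u v @ w else u @ intercal (j - rk_word u) w v)"
proof (induction u arbitrary: j)
  case (Cons c u)
  then show ?case by (cases c) (auto simp: Suc_diff_le)
qed simp

fun fill_seps :: "'a sym list \<Rightarrow> 'a sym list option list \<Rightarrow> 'a sym list" where
  "fill_seps [] os = []"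
| "fill_seps (Letter a # u) os = Letter a # fill_seps u os"
| "fill_seps (Sep # u) [] = Sep # fill_seps u []"
| "fill_seps (Sep # u) (None # os) = Sep # fill_seps u os"
| "fill_seps (Sep # u) (Some v # os) = v @ fill_seps u os"

fun slot_rank :: "'a sym list option \<Rightarrow> nat" where
  "slot_rank None = 1"
| "slot_rank (Some w) = rk_word w"

fun intercal_slots :: "nat \<Rightarrow> 'a sym list option list \<Rightarrow> 'a sym list \<Rightarrow> 'a sym list option list" where
  "intercal_slots j [] v = []"
| "intercal_slots j (None # os) v =
     (if j = 1 then Some v # os else None # intercal_slots (j - 1) os v)"
| "intercal_slots j (Some w # os) v =
     (if j \<le> rk_word w then Some (intercal j w v) # os
      else Some w # intercal_slots (j - rk_word w) os v)"

lemma rk_fill_seps: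
  "length os = rk_word u \<Longrightarrow> rk_word (fill_seps u os) = sum_list (map slot_rank os)"
proof (induction u arbitrary: os)
  case (Cons c u)
  then show ?case by (cases c; cases os; cases "hd os") auto
qed simp

lemma intercal_fill_seps:
  "length os = rk_word u \<Longrightarrow> 1 \<le> j \<Longrightarrow>
     intercal j (fill_seps u os) v = fill_seps u (intercal_slots j os v)"
proof (induction u arbitrary: os j)
  case (Cons c u)
  then show ?case
    by (cases c; cases os; cases "hd os") (auto simp: intercal_append rk_fill_seps)
qed simp

lemma intercal_slots_None:
  "g < length os \<Longrightarrow> os ! g = None \<Longrightarrow>
     intercal_slots (Suc (sum_list (map slot_rank (take g os)))) os v = os[g := Some v]"
proof (induction os arbitrary: g)
  case (Cons o1 os)
  then show ?case by (cases g; cases o1) auto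
qed simp

lemma fill_seps_replicate:
  "n = rk_word u \<Longrightarrow> fill_seps u (replicate n None) = u"
  "n = rk_word u \<Longrightarrow> fill_seps u (replicate n (Some [Sep])) = u"
proof (induction u arbitrary: n)
  case (Cons c u)
  { case 1 with Cons show ?case by (cases c) auto }
  { case 2 with Cons show ?case by (cases c) auto }
qed simp_all

lemma in_listset_iff: "xs \<in> listset As \<longleftrightarrow> list_all2 (\<in>) xs As"
  by (induction As arbitrary: xs) (auto simp: set_Cons_def list_all2_Cons2)

datatype 'a nf_item = NWord "'a list" | NSep | NVar nat nat "'a nf_item list list"

fun rank_item :: "'a nf_item \<Rightarrow> nat" and rank_seq :: "'a nf_item list \<Rightarrow> nat" where
  "rank_item (NWord w) = 0"
| "rank_item NSep = 1"
| "rank_item (NVar r i gs) = sum_list (map rank_seq gs)"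
| "rank_seq [] = 0"
| "rank_seq (x # s) = rank_item x + rank_seq s"

fun wf_item :: "nat \<Rightarrow> 'a nf_item \<Rightarrow> bool" and wf_seq :: "nat \<Rightarrow> 'a nf_item list \<Rightarrow> bool" where
  "wf_item k (NWord w) = True"
| "wf_item k NSep = True"
| "wf_item k (NVar r i gs) = (length gs = r \<and> r \<le> k \<and> (\<forall>s \<in> set gs. wf_seq k s))"
| "wf_seq k [] = True"
| "wf_seq k (x # s) = (wf_item k x \<and> wf_seq k s)"

fun eval_item :: "(nat \<Rightarrow> nat \<Rightarrow> 'a sym list set) \<Rightarrow> 'a nf_item \<Rightarrow> 'a sym list set"
  and eval_seq :: "(nat \<Rightarrow> nat \<Rightarrow> 'a sym list set) \<Rightarrow> 'a nf_item list \<Rightarrow> 'a sym list set" where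
  "eval_item \<mu> (NWord w) = {map Letter w}"
| "eval_item \<mu> NSep = {[Sep]}"
| "eval_item \<mu> (NVar r i gs) =
     {fill_seps u (map Some vs) | u vs. u \<in> \<mu> r i \<and> vs \<in> listset (map (eval_seq \<mu>) gs)}"
| "eval_seq \<mu> [] = {[]}"
| "eval_seq \<mu> (x # s) = {u @ v | u v. u \<in> eval_item \<mu> x \<and> v \<in> eval_seq \<mu> s}"

lemma sum_list_list_all2:
  "list_all2 (\<lambda>x y. f x = g y) xs ys \<Longrightarrow> sum_list (map f xs) = sum_list (map g ys)"
  by (induction rule: list_all2_induct) auto

lemma rk_word_eval:
  "valuation \<mu> \<Longrightarrow> wf_item k x \<Longrightarrow> w \<in> eval_item \<mu> x \<Longrightarrow> rk_word w = rank_item x"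
  "valuation \<mu> \<Longrightarrow> wf_seq k s \<Longrightarrow> w \<in> eval_seq \<mu> s \<Longrightarrow> rk_word w = rank_seq s"
proof (induction x and s arbitrary: w and w rule: rank_item_rank_seq.induct)
  case (3 r i gs)
  then obtain u vs where w: "w = fill_seps u (map Some vs)" "u \<in> \<mu> r i"
    and vs: "list_all2 (\<in>) vs (map (eval_seq \<mu>) gs)"
    by (auto simp: in_listset_iff)
  have "rk_word u = r" using "3.prems"(1) w(2) by (simp add: valuation_def)
  moreover have "list_all2 (\<lambda>v s. rk_word v = rank_seq s) vs gs"
    using vs "3.prems" by (auto simp: list_all2_conv_all_nth intro!: "3.IH")
  ultimately show ?case
    using w "3.prems"(2) list_all2_lengthD[OF vs]
    by (simp add: rk_fill_seps comp_def sum_list_list_all2)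
qed auto

fun ins_item :: "nat \<Rightarrow> 'a nf_item \<Rightarrow> 'a nf_item list \<Rightarrow> 'a nf_item list"
  and ins_seq :: "nat \<Rightarrow> 'a nf_item list \<Rightarrow> 'a nf_item list \<Rightarrow> 'a nf_item list"
  and ins_args :: "nat \<Rightarrow> 'a nf_item list list \<Rightarrow> 'a nf_item list \<Rightarrow> 'a nf_item list list" where
  "ins_item j (NWord w) t = [NWord w]"
| "ins_item j NSep t = t"
| "ins_item j (NVar r i gs) t = [NVar r i (ins_args j gs t)]"
| "ins_seq j [] t = []"
| "ins_seq j (x # s) t =
     (if j \<le> rank_item x then ins_item j x t @ s else x # ins_seq (j - rank_item x) s t)"
| "ins_args j [] t = []"
| "ins_args j (g # gs) t =
     (if j \<le> rank_seq g then ins_seq j g t # gs else g # ins_args (j - rank_seq g) gs t)"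

fun intercal_args :: "nat \<Rightarrow> 'a sym list list \<Rightarrow> 'a sym list \<Rightarrow> 'a sym list list" where
  "intercal_args j [] v = []"
| "intercal_args j (w # ws) v =
     (if j \<le> rk_word w then intercal j w v # ws else w # intercal_args (j - rk_word w) ws v)"

lemma intercal_slots_map_Some:
  "intercal_slots j (map Some ws) v = map Some (intercal_args j ws v)"
  by (induction ws arbitrary: j) auto

lemma rank_seq_append [simp]: "rank_seq (s @ t) = rank_seq s + rank_seq t"
  by (induction s) auto

lemma wf_seq_append [simp]: "wf_seq k (s @ t) \<longleftrightarrow> wf_seq k s \<and> wf_seq k t"
  by (induction s) auto

lemma eval_seq_append:
  "eval_seq \<mu> (s @ t) = {u @ v | u v. u \<in> eval_seq \<mu> s \<and> v \<in> eval_seq \<mu> t}"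
  by (induction s) (auto, metis append.assoc, fastforce)

lemma length_ins_args [simp]: "length (ins_args j gs t) = length gs"
  by (induction gs arbitrary: j) auto

lemma wf_ins:
  "wf_seq k t \<Longrightarrow> wf_item k x \<Longrightarrow> wf_seq k (ins_item j x t)"
  "wf_seq k t \<Longrightarrow> wf_seq k s \<Longrightarrow> wf_seq k (ins_seq j s t)"
  "wf_seq k t \<Longrightarrow> \<forall>g \<in> set gs. wf_seq k g \<Longrightarrow> \<forall>g \<in> set (ins_args j gs t). wf_seq k g"
  by (induction j x t and j s t and j gs t rule: ins_item_ins_seq_ins_args.induct) auto

lemma rank_ins:
  "1 \<le> j \<Longrightarrow> j \<le> rank_item x \<Longrightarrow> rank_seq (ins_item j x t) = rank_item x + rank_seq t - 1"
  "1 \<le> j \<Longrightarrow> j \<le> rank_seq s \<Longrightarrow> rank_seq (ins_seq j s t) = rank_seq s + rank_seq t - 1"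
  "1 \<le> j \<Longrightarrow> j \<le> sum_list (map rank_seq gs) \<Longrightarrow>
     sum_list (map rank_seq (ins_args j gs t)) = sum_list (map rank_seq gs) + rank_seq t - 1"
  by (induction j x t and j s t and j gs t rule: ins_item_ins_seq_ins_args.induct) auto

lemma eval_ins:
  "valuation \<mu> \<Longrightarrow> wf_item k x \<Longrightarrow> 1 \<le> j \<Longrightarrow> j \<le> rank_item x \<Longrightarrow>
     eval_seq \<mu> (ins_item j x t) = {intercal j u v | u v. u \<in> eval_item \<mu> x \<and> v \<in> eval_seq \<mu> t}"
  "valuation \<mu> \<Longrightarrow> wf_seq k s \<Longrightarrow> 1 \<le> j \<Longrightarrow> j \<le> rank_seq s \<Longrightarrow>
     eval_seq \<mu> (ins_seq j s t) = {intercal j u v | u v. u \<in> eval_seq \<mu> s \<and> v \<in> eval_seq \<mu> t}"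
  "valuation \<mu> \<Longrightarrow> \<forall>g \<in> set gs. wf_seq k g \<Longrightarrow> 1 \<le> j \<Longrightarrow> j \<le> sum_list (map rank_seq gs) \<Longrightarrow>
     listset (map (eval_seq \<mu>) (ins_args j gs t)) =
       {intercal_args j vs v | vs v. vs \<in> listset (map (eval_seq \<mu>) gs) \<and> v \<in> eval_seq \<mu> t}"
proof (induction j x t and j s t and j gs t rule: ins_item_ins_seq_ins_args.induct)
  case (2 j t)
  then show ?case by auto
next
  case (3 j r i gs t)
  have intercal_NVar: "intercal j (fill_seps u (map Some vs)) v = fill_seps u (map Some (intercal_args j vs v))"
    if "u \<in> \<mu> r i" "vs \<in> listset (map (eval_seq \<mu>) gs)" for u vs v
    using that 3 by (auto simp: intercal_fill_seps intercal_slots_map_Some valuation_def in_listset_iff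
        dest: list_all2_lengthD)
  from 3 have IH: "listset (map (eval_seq \<mu>) (ins_args j gs t)) =
       {intercal_args j vs v | vs v. vs \<in> listset (map (eval_seq \<mu>) gs) \<and> v \<in> eval_seq \<mu> t}"
    by simp
  show ?case
    by (simp add: IH, safe) (metis intercal_NVar)+
next
  case (5 j x s t)
  have rk_u: "rk_word u = rank_item x" if "u \<in> eval_item \<mu> x" for u
    using rk_word_eval(1) 5 that by auto
  show ?case
  proof (cases "j \<le> rank_item x")
    case True
    with 5 have IH: "eval_seq \<mu> (ins_item j x t) =
        {intercal j u v | u v. u \<in> eval_item \<mu> x \<and> v \<in> eval_seq \<mu> t}"
      by simp
    have intercal_head: "intercal j (u @ w) v = intercal j u v @ w" if "u \<in> eval_item \<mu> x" for u w v
      using that rk_u True 5 by (simp add: intercal_append)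
    show ?thesis
      using True by (simp add: IH eval_seq_append, safe) (metis intercal_head)+
  next
    case False
    with 5 have IH: "eval_seq \<mu> (ins_seq (j - rank_item x) s t) =
        {intercal (j - rank_item x) u v | u v. u \<in> eval_seq \<mu> s \<and> v \<in> eval_seq \<mu> t}"
      by simp
    have intercal_tail: "intercal j (u @ w) v = u @ intercal (j - rank_item x) w v"
      if "u \<in> eval_item \<mu> x" for u w v
      using that rk_u False 5 by (simp add: intercal_append)
    show ?thesis
      using False by (simp add: IH, safe) (metis intercal_tail)+
  qed
next
  case (7 j g gs t)
  have rk_u: "rk_word u = rank_seq g" if "u \<in> eval_seq \<mu> g" for u
    using rk_word_eval(2) 7 that by auto
  show ?case
  proof (cases "j \<le> rank_seq g")
    case True
    with 7 have IH: "eval_seq \<mu> (ins_seq j g t) =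
        {intercal j u v | u v. u \<in> eval_seq \<mu> g \<and> v \<in> eval_seq \<mu> t}"
      by simp
    show ?thesis
      using True rk_u by (simp add: IH set_Cons_def, safe) (metis intercal_args.simps(2))+
  next
    case False
    with 7 have IH: "listset (map (eval_seq \<mu>) (ins_args (j - rank_seq g) gs t)) =
        {intercal_args (j - rank_seq g) vs v | vs v.
           vs \<in> listset (map (eval_seq \<mu>) gs) \<and> v \<in> eval_seq \<mu> t}"
      by simp
    show ?thesis
      using False rk_u by (simp add: IH set_Cons_def, safe) (metis intercal_args.simps(2))+
  qed
qed auto

text \<open>The clause for NT is junk: nf_of is only applied to ground multicontexts.\<close>
fun nf_of :: "('a, 'n) mc \<Rightarrow> 'a nf_item list" where
  "nf_of (NT A) = []"
| "nf_of (Var r i) = [NVar r i (replicate r [NSep])]"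
| "nf_of (Word w) = [NWord w]"
| "nf_of One = [NSep]"
| "nf_of (Cat a b) = nf_of a @ nf_of b"
| "nf_of (Ins j a b) = ins_seq j (nf_of a) (nf_of b)"

lemma listset_replicate [simp]: "listset (replicate n {x}) = {replicate n x}"
  by (induction n) (auto simp: set_Cons_def)

lemma wf_rank_nf_of:
  "ground C \<Longrightarrow> wf_mc \<rho> C \<Longrightarrow> \<forall>v \<in> vars C. fst v \<le> k \<Longrightarrow>
    wf_seq k (nf_of C) \<and> rank_seq (nf_of C) = rk \<rho> C"
  by (induction C) (auto simp: ground_def wf_ins rank_ins sum_list_replicate)

lemma eval_nf_of:
  assumes "valuation \<mu>"
  shows "ground C \<Longrightarrow> wf_mc \<rho> C \<Longrightarrow> \<forall>v \<in> vars C. fst v \<le> k \<Longrightarrow>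
    eval_seq \<mu> (nf_of C) = eval \<mu> C"
proof (induction C)
  case (Var r i)
  have "fill_seps u (replicate r (Some [Sep])) = u" if "u \<in> \<mu> r i" for u
    using assms that by (simp add: valuation_def fill_seps_replicate)
  then show ?case
    by (force simp: map_replicate_const)
next
  case (Ins j a b)
  then have "wf_seq k (nf_of a)" "rank_seq (nf_of a) = rk \<rho> a" "1 \<le> j" "j \<le> rk \<rho> a"
    and "eval_seq \<mu> (nf_of a) = eval \<mu> a" "eval_seq \<mu> (nf_of b) = eval \<mu> b"
    using wf_rank_nf_of[of a \<rho> k] by (auto simp: ground_def)
  then show ?case
    by (simp add: eval_ins(2)[OF assms])
qed (auto simp: ground_def eval_seq_append)

text \<open>Once the holes in D of a variable of arity r have been filled by multicontexts of ranks qs,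
  hole h spans slot_width qs D h separators, so hole g is the separator with index
  1 + (\<Sum>h<g. slot_width qs D h).\<close>
definition slot_width :: "nat list \<Rightarrow> nat set \<Rightarrow> nat \<Rightarrow> nat" where
  "slot_width qs D h = (if h \<in> D then qs ! h else 1)"

fun fill_holes ::
  "nat list \<Rightarrow> ('a, 'n) mc list \<Rightarrow> nat set \<Rightarrow> ('a, 'n) mc \<Rightarrow> nat list \<Rightarrow> ('a, 'n) mc" where
  "fill_holes qs cs D T [] = T"
| "fill_holes qs cs D T (g # ord) =
     fill_holes qs cs (insert g D) (Ins (Suc (\<Sum>h<g. slot_width qs D h)) T (cs ! g)) ord"

definition filled_slots :: "nat \<Rightarrow> 'a sym list list \<Rightarrow> nat set \<Rightarrow> 'a sym list option list" where
  "filled_slots r vs D = map (\<lambda>h. if h \<in> D then Some (vs ! h) else None) [0..<r]"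

definition partial_fills ::
  "(nat \<Rightarrow> nat \<Rightarrow> 'a sym list set) \<Rightarrow> nat \<Rightarrow> nat \<Rightarrow> ('a, 'n) mc list \<Rightarrow> nat set \<Rightarrow> 'a sym list set" where
  "partial_fills \<mu> r i cs D = {fill_seps u (filled_slots r vs D) | u vs.
     u \<in> \<mu> r i \<and> length vs = r \<and> (\<forall>h \<in> D. vs ! h \<in> eval \<mu> (cs ! h))}"

lemma intercal_filled_slots:
  assumes "rk_word u = r" "length vs = r" "\<forall>h \<in> D. rk_word (vs ! h) = qs ! h" "g < r" "g \<notin> D"
  shows "intercal (Suc (\<Sum>h<g. slot_width qs D h)) (fill_seps u (filled_slots r vs D)) v =
    fill_seps u (filled_slots r (vs[g := v]) (insert g D))"
proof -
  let ?os = "filled_slots r vs D"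
  have "sum_list (map slot_rank (take g ?os)) = (\<Sum>h<g. slot_width qs D h)"
    using assms(3,4) by (simp add: filled_slots_def take_map interv_sum_list_conv_sum_set_nat
        atLeast0LessThan slot_width_def) (rule sum.cong; simp)
  moreover have "length ?os = rk_word u" "g < length ?os" "?os ! g = None"
    using assms by (simp_all add: filled_slots_def)
  ultimately have "intercal (Suc (\<Sum>h<g. slot_width qs D h)) (fill_seps u ?os) v =
      fill_seps u (?os[g := Some v])"
    by (metis intercal_fill_seps intercal_slots_None le_add1 plus_1_eq_Suc)
  also have "(filled_slots r vs D)[g := Some v] = filled_slots r (vs[g := v]) (insert g D)"
    using assms by (auto simp: filled_slots_def nth_list_update intro!: nth_equalityI)
  finally show ?thesis .
qed

lemma eval_fill_hole:
  assumes "valuation \<mu>" "\<forall>h<r. \<forall>w \<in> eval \<mu> (cs ! h). rk_word w = qs ! h"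
    and "g < r" "g \<notin> D" "D \<subseteq> {..<r}" "eval \<mu> T = partial_fills \<mu> r i cs D"
  shows "eval \<mu> (Ins (Suc (\<Sum>h<g. slot_width qs D h)) T (cs ! g)) = partial_fills \<mu> r i cs (insert g D)"
proof -
  let ?j = "Suc (\<Sum>h<g. slot_width qs D h)"
  have step: "intercal ?j (fill_seps u (filled_slots r vs D)) v =
      fill_seps u (filled_slots r (vs[g := v]) (insert g D))"
    if "u \<in> \<mu> r i" "length vs = r" "\<forall>h \<in> D. vs ! h \<in> eval \<mu> (cs ! h)" for u vs v
    using that assms by (intro intercal_filled_slots) (auto simp: valuation_def)
  show ?thesis
  proof (intro set_eqI iffI)
    fix z assume "z \<in> eval \<mu> (Ins ?j T (cs ! g))"
    then obtain u vs v where z: "z = intercal ?j (fill_seps u (filled_slots r vs D)) v"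
      and uvs: "u \<in> \<mu> r i" "length vs = r" "\<forall>h \<in> D. vs ! h \<in> eval \<mu> (cs ! h)"
      and v: "v \<in> eval \<mu> (cs ! g)"
      using assms(6) by (auto simp: partial_fills_def)
    have "z = fill_seps u (filled_slots r (vs[g := v]) (insert g D))"
      using z step[OF uvs] by simp
    moreover have "\<forall>h \<in> insert g D. vs[g := v] ! h \<in> eval \<mu> (cs ! h)"
      using uvs v assms(3) by (auto simp: nth_list_update)
    ultimately show "z \<in> partial_fills \<mu> r i cs (insert g D)"
      unfolding partial_fills_def using uvs(1,2) by (intro CollectI exI[of _ u] exI[of _ "vs[g := v]"]) simp
  next
    fix z assume "z \<in> partial_fills \<mu> r i cs (insert g D)"
    then obtain u vs where z: "z = fill_seps u (filled_slots r vs (insert g D))"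
      and uvs: "u \<in> \<mu> r i" "length vs = r" "\<forall>h \<in> insert g D. vs ! h \<in> eval \<mu> (cs ! h)"
      by (auto simp: partial_fills_def)
    have "z = intercal ?j (fill_seps u (filled_slots r vs D)) (vs ! g)"
      using z step[of u vs "vs ! g"] uvs by simp
    moreover have "fill_seps u (filled_slots r vs D) \<in> eval \<mu> T"
      using uvs assms(6) unfolding partial_fills_def by blast
    ultimately show "z \<in> eval \<mu> (Ins ?j T (cs ! g))"
      using uvs(3) by (simp only: eval.simps) blast
  qed
qed

lemma eval_fill_holes:
  assumes "valuation \<mu>" "\<forall>h<r. \<forall>w \<in> eval \<mu> (cs ! h). rk_word w = qs ! h"
  shows "distinct ord \<Longrightarrow> set ord \<subseteq> {..<r} \<Longrightarrow> set ord \<inter> D = {} \<Longrightarrow> D \<subseteq> {..<r} \<Longrightarrow>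
    eval \<mu> T = partial_fills \<mu> r i cs D \<Longrightarrow>
    eval \<mu> (fill_holes qs cs D T ord) = partial_fills \<mu> r i cs (D \<union> set ord)"
proof (induction ord arbitrary: D T)
  case (Cons g ord)
  then show ?case using eval_fill_hole[OF assms] by simp
qed simp

lemma hole_index_le_width_sum:
  assumes "g < r" "g \<notin> D"
  shows "Suc (\<Sum>h<g. slot_width qs D h) \<le> (\<Sum>h<r. slot_width qs D h)"
proof -
  have "Suc (\<Sum>h<g. slot_width qs D h) = (\<Sum>h<Suc g. slot_width qs D h)"
    using assms(2) by (simp add: slot_width_def)
  also have "\<dots> \<le> (\<Sum>h<r. slot_width qs D h)"
    using assms(1) by (intro sum_mono2) auto
  finally show ?thesis .
qed

lemma width_sum_insert:
  assumes "g < r" "g \<notin> D"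
  shows "(\<Sum>h<r. slot_width qs (insert g D) h) + 1 = (\<Sum>h<r. slot_width qs D h) + qs ! g"
proof -
  have "(\<Sum>h \<in> {..<r} - {g}. slot_width qs (insert g D) h) = (\<Sum>h \<in> {..<r} - {g}. slot_width qs D h)"
    by (intro sum.cong) (auto simp: slot_width_def)
  then show ?thesis
    using assms sum.remove[of "{..<r}" g "slot_width qs (insert g D)"]
      sum.remove[of "{..<r}" g "slot_width qs D"]
    by (simp add: slot_width_def)
qed

lemma k_correct_fill_holes:
  assumes "\<forall>g \<in> set ord. k_correct \<rho> k (cs ! g) \<and> ground (cs ! g) \<and> rk \<rho> (cs ! g) = qs ! g"
  shows "distinct ord \<Longrightarrow> set ord \<subseteq> {..<r} \<Longrightarrow> set ord \<inter> D = {} \<Longrightarrow>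
    k_correct \<rho> k T \<Longrightarrow> ground T \<Longrightarrow> rk \<rho> T = (\<Sum>h<r. slot_width qs D h) \<Longrightarrow>
    \<forall>n. (\<Sum>h<r. slot_width qs (D \<union> set (take n ord)) h) \<le> k \<Longrightarrow>
    k_correct \<rho> k (fill_holes qs cs D T ord) \<and> ground (fill_holes qs cs D T ord) \<and>
    rk \<rho> (fill_holes qs cs D T ord) = (\<Sum>h<r. slot_width qs (D \<union> set ord) h)"
  using assms
proof (induction ord arbitrary: D T)
  case (Cons g ord)
  let ?T = "Ins (Suc (\<Sum>h<g. slot_width qs D h)) T (cs ! g)"
  have g: "g < r" "g \<notin> D"
    using Cons.prems(2,3) by auto
  have rk_T: "rk \<rho> ?T = (\<Sum>h<r. slot_width qs (insert g D) h)"
    using width_sum_insert[OF g, of qs] Cons.prems(6,8) by simp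
  moreover have "(\<Sum>h<r. slot_width qs (insert g D) h) \<le> k"
    using Cons.prems(7) by (metis Un_insert_right sup_bot_right list.set(1,2) take_0 take_Suc_Cons)
  ultimately have "k_correct \<rho> k ?T" "ground ?T"
    using hole_index_le_width_sum[OF g, of qs] Cons.prems(4-6,8)
    by (auto simp: k_correct_def ground_def)
  moreover have "\<forall>n. (\<Sum>h<r. slot_width qs (insert g D \<union> set (take n ord)) h) \<le> k"
    using Cons.prems(7) by (metis Un_insert_left Un_insert_right list.set(2) take_Suc_Cons)
  ultimately show ?case
    using Cons.prems(1-3,8) rk_T by (simp add: Cons.IH)
qed simp

text \<open>Filling the holes of rank 0 first, the rank decreases from r and then increases to
  the final rank, so no intermediate rank exceeds both.\<close>
definition hole_order :: "nat list \<Rightarrow> nat \<Rightarrow> nat list" where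
  "hole_order qs r = filter (\<lambda>h. qs ! h = 0) [0..<r] @ filter (\<lambda>h. qs ! h \<noteq> 0) [0..<r]"

lemma distinct_hole_order: "distinct (hole_order qs r)"
  and set_hole_order: "set (hole_order qs r) = {..<r}"
  by (auto simp: hole_order_def)

lemma width_sum_hole_order_le:
  "(\<Sum>h<r. slot_width qs (set (take n (hole_order qs r))) h) \<le> max r (\<Sum>h<r. qs ! h)"
proof -
  let ?zeros = "filter (\<lambda>h. qs ! h = 0) [0..<r]"
  show ?thesis
  proof (cases "n \<le> length ?zeros")
    case True
    then have "\<forall>h<r. slot_width qs (set (take n (hole_order qs r))) h \<le> 1"
      by (auto simp: hole_order_def slot_width_def dest!: in_set_takeD)
    then have "(\<Sum>h<r. slot_width qs (set (take n (hole_order qs r))) h) \<le> (\<Sum>h<r. 1)"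
      by (intro sum_mono) auto
    then show ?thesis by simp
  next
    case False
    then have "\<forall>h<r. slot_width qs (set (take n (hole_order qs r))) h \<le> qs ! h"
      by (auto simp: hole_order_def slot_width_def)
    then have "(\<Sum>h<r. slot_width qs (set (take n (hole_order qs r))) h) \<le> (\<Sum>h<r. qs ! h)"
      by (intro sum_mono) auto
    then show ?thesis by simp
  qed
qed

definition apply_var :: "nat \<Rightarrow> nat \<Rightarrow> nat list \<Rightarrow> ('a, 'n) mc list \<Rightarrow> ('a, 'n) mc" where
  "apply_var r i qs cs = fill_holes qs cs {} (Var r i) (hole_order qs r)"

lemma k_correct_apply_var:
  assumes "length qs = r" "r \<le> k" "sum_list qs \<le> k"
    and "\<forall>h<r. k_correct \<rho> k (cs ! h) \<and> ground (cs ! h) \<and> rk \<rho> (cs ! h) = qs ! h"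
  shows "k_correct \<rho> k (apply_var r i qs cs) \<and> ground (apply_var r i qs cs) \<and>
    rk \<rho> (apply_var r i qs cs) = sum_list qs"
proof -
  have sum_qs: "sum_list qs = (\<Sum>h<r. qs ! h)"
    using assms(1) by (simp add: sum_list_sum_nth atLeast0LessThan)
  have "(\<Sum>h<r. slot_width qs ({} \<union> set (take n (hole_order qs r))) h) \<le> k" for n
    using width_sum_hole_order_le[where r = r and qs = qs and n = n] assms(2,3) sum_qs by simp
  moreover have "(\<Sum>h<r. slot_width qs ({} \<union> set (hole_order qs r)) h) = sum_list qs"
    using sum_qs by (simp add: set_hole_order slot_width_def)
  moreover have "k_correct \<rho> k (Var r i)" "ground (Var r i)" "rk \<rho> (Var r i) = (\<Sum>h<r. slot_width qs {} h)"
    using assms(2) by (simp_all add: k_correct_def ground_def slot_width_def)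
  ultimately show ?thesis
    using k_correct_fill_holes[where ord = "hole_order qs r" and D = "{}" and T = "Var r i"
        and r = r and qs = qs and cs = cs and \<rho> = \<rho> and k = k] assms(4)
    by (simp add: apply_var_def distinct_hole_order set_hole_order)
qed

lemma eval_apply_var:
  assumes "valuation \<mu>" "length cs = r" "\<forall>h<r. \<forall>w \<in> eval \<mu> (cs ! h). rk_word w = qs ! h"
  shows "eval \<mu> (apply_var r i qs cs) =
    {fill_seps u (map Some vs) | u vs. u \<in> \<mu> r i \<and> vs \<in> listset (map (eval \<mu>) cs)}"
proof -
  have "fill_seps u (filled_slots r vs {}) = u" if "u \<in> \<mu> r i" for u vs
    using assms(1) that
    by (simp add: filled_slots_def map_replicate_const fill_seps_replicate valuation_def)
  then have "eval \<mu> (Var r i :: ('a, 'n) mc) = partial_fills \<mu> r i cs {}"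
    unfolding partial_fills_def by auto (metis length_replicate)
  then have "eval \<mu> (apply_var r i qs cs) = partial_fills \<mu> r i cs {..<r}"
    using eval_fill_holes[OF assms(1,3)] by (simp add: apply_var_def distinct_hole_order set_hole_order)
  also have "\<dots> = {fill_seps u (map Some vs) | u vs. u \<in> \<mu> r i \<and> vs \<in> listset (map (eval \<mu>) cs)}"
  proof -
    have "filled_slots r vs {..<r} = map Some vs" if "length vs = r" for vs :: "'a sym list list"
      using that by (auto simp: filled_slots_def intro: nth_equalityI)
    then show ?thesis
      using assms(2) by (auto simp: partial_fills_def in_listset_iff list_all2_conv_all_nth) (fastforce, metis lessThan_iff)
  qed
  finally show ?thesis .
qed

fun build_item :: "'a nf_item \<Rightarrow> ('a, 'n) mc" and build_seq :: "'a nf_item list \<Rightarrow> ('a, 'n) mc" where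
  "build_item (NWord w) = Word w"
| "build_item NSep = One"
| "build_item (NVar r i gs) = apply_var r i (map rank_seq gs) (map build_seq gs)"
| "build_seq [] = Word []"
| "build_seq (x # s) = Cat (build_item x) (build_seq s)"

lemma k_correct_build:
  fixes x :: "'a nf_item" and s :: "'a nf_item list" and \<rho> :: "'n \<Rightarrow> nat"
  shows "wf_item k x \<Longrightarrow> rank_item x \<le> k \<Longrightarrow>
    k_correct \<rho> k (build_item x) \<and> ground (build_item x :: ('a, 'n) mc) \<and> rk \<rho> (build_item x) = rank_item x"
    "wf_seq k s \<Longrightarrow> rank_seq s \<le> k \<Longrightarrow>
    k_correct \<rho> k (build_seq s) \<and> ground (build_seq s :: ('a, 'n) mc) \<and> rk \<rho> (build_seq s) = rank_seq s"
proof (induction x and s rule: rank_item_rank_seq.induct)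
  case (3 r i gs)
  have "rank_seq s \<le> k" if "s \<in> set gs" for s
    using "3.prems"(2) member_le_sum_list[of "rank_seq s" "map rank_seq gs"] that by simp
  let ?cs = "map build_seq gs :: ('a, 'n) mc list"
  from "3" \<open>\<And>s. s \<in> set gs \<Longrightarrow> rank_seq s \<le> k\<close>
  have "\<forall>h<r. k_correct \<rho> k (?cs ! h) \<and> ground (?cs ! h) \<and> rk \<rho> (?cs ! h) = map rank_seq gs ! h"
    by auto
  with "3.prems" show ?case
    unfolding build_item.simps rank_item.simps by (intro k_correct_apply_var) auto
qed (auto simp: k_correct_def ground_def)

lemma eval_build:
  fixes x :: "'a nf_item" and s :: "'a nf_item list"
  assumes "valuation \<mu>"
  shows "wf_item k x \<Longrightarrow> eval \<mu> (build_item x :: ('a, 'n) mc) = eval_item \<mu> x"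
    and "wf_seq k s \<Longrightarrow> eval \<mu> (build_seq s :: ('a, 'n) mc) = eval_seq \<mu> s"
proof (induction x and s rule: rank_item_rank_seq.induct)
  case (3 r i gs)
  let ?cs = "map build_seq gs :: ('a, 'n) mc list"
  have "map (eval \<mu>) ?cs = map (eval_seq \<mu>) gs"
    using 3 by simp
  moreover have "\<forall>h<r. \<forall>w \<in> eval \<mu> (?cs ! h). rk_word w = map rank_seq gs ! h"
    using 3 rk_word_eval(2)[OF assms] by (auto simp del: build_seq.simps) (meson nth_mem)
  moreover have "length ?cs = r"
    using "3.prems" by simp
  ultimately show ?case
    using eval_apply_var[OF assms, of ?cs r "map rank_seq gs" i] by (simp del: map_eq_conv)
qed auto

lemma ground_equiv_k_correct:
  fixes D :: "('a, 'n) mc"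
  assumes "ground D" "wf_mc \<rho> D" "rk \<rho> D \<le> k" "\<forall>v \<in> vars D. fst v \<le> k"
  shows "\<exists>D'. k_correct \<rho> k D' \<and> ground_equiv \<rho> D D'"
proof -
  define D' :: "('a, 'n) mc" where "D' = build_seq (nf_of D)"
  have nf: "wf_seq k (nf_of D)" "rank_seq (nf_of D) = rk \<rho> D"
    using wf_rank_nf_of[OF assms(1,2,4)] by auto
  have "k_correct \<rho> k D'" "ground D'"
    using k_correct_build(2)[of k "nf_of D" \<rho>] nf assms(3) by (simp_all add: D'_def)
  moreover have "eval \<mu> D = eval \<mu> D'" if "valuation \<mu>" for \<mu>
    using eval_build(2)[OF that nf(1), where 'n = 'n] eval_nf_of[OF that assms(1,2,4)]
    by (simp add: D'_def)
  ultimately show ?thesis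
    using assms(1,2) by (auto simp: ground_equiv_def k_correct_def)
qed

fun abstract_nts :: "('n \<Rightarrow> nat) \<Rightarrow> ('n \<Rightarrow> nat) \<Rightarrow> ('a, 'n) mc \<Rightarrow> ('a, 'n) mc" where
  "abstract_nts \<rho> ix (NT A) = Var (\<rho> A) (ix A)"
| "abstract_nts \<rho> ix (Cat a b) = Cat (abstract_nts \<rho> ix a) (abstract_nts \<rho> ix b)"
| "abstract_nts \<rho> ix (Ins j a b) = Ins j (abstract_nts \<rho> ix a) (abstract_nts \<rho> ix b)"
| "abstract_nts \<rho> ix C = C"

lemma abstract_nts_props:
  "ground (abstract_nts \<rho> ix C)"
  "rk \<rho> (abstract_nts \<rho> ix C) = rk \<rho> C"
  "wf_mc \<rho> (abstract_nts \<rho> ix C) = wf_mc \<rho> C"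
  "vars (abstract_nts \<rho> ix C) \<subseteq> vars C \<union> (\<lambda>A. (\<rho> A, ix A)) ` nts C"
  by (induction C) (auto simp: ground_def)

lemma subst_abstract_nts:
  assumes "\<forall>A \<in> nts C. \<sigma> (\<rho> A, ix A) = Some A" "\<forall>v \<in> vars C. \<sigma> v = None"
  shows "subst \<sigma> (abstract_nts \<rho> ix C) = C"
  using assms by (induction C) auto

lemma rk_subst:
  "\<forall>v A. \<sigma> v = Some A \<longrightarrow> \<rho> A = fst v \<Longrightarrow> rk \<rho> (subst \<sigma> T) = rk \<rho> T"
  by (induction T) (auto split: option.split)

lemma wf_subst:
  "\<forall>v A. \<sigma> v = Some A \<longrightarrow> \<rho> A = fst v \<Longrightarrow> wf_mc \<rho> (subst \<sigma> T) = wf_mc \<rho> T"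
  by (induction T) (auto simp: rk_subst split: option.split)

lemma subterms_subst: "subterms (subst \<sigma> T) = subst \<sigma> ` subterms T"
  by (induction T) (auto split: option.split)

lemma k_correct_subst:
  "\<forall>v A. \<sigma> v = Some A \<longrightarrow> \<rho> A = fst v \<Longrightarrow> k_correct \<rho> k (subst \<sigma> T) = k_correct \<rho> k T"
  by (simp add: k_correct_def wf_subst rk_subst subterms_subst)

lemma finite_nts: "finite (nts C)"
  and finite_vars: "finite (vars C)"
  by (induction C) auto

lemma obtain_ground_abstraction:
  fixes C :: "('a, 'n) mc"
  obtains \<sigma> D where "\<forall>v A. \<sigma> v = Some A \<longrightarrow> \<rho> A = fst v" "subst \<sigma> D = C" "ground D"
    "rk \<rho> D = rk \<rho> C" "wf_mc \<rho> D = wf_mc \<rho> C" "fst ` vars D \<subseteq> fst ` vars C \<union> \<rho> ` nts C"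
proof -
  obtain f :: "'n \<Rightarrow> nat" where f: "inj_on f (nts C)"
    using finite_imp_inj_to_nat_seg[OF finite_nts[of C]] by (elim exE conjE)
  define N where "N = Suc (\<Sum>v \<in> vars C. snd v)"
  have N: "\<forall>v \<in> vars C. snd v < N"
    using finite_vars[of C] by (auto simp: N_def intro!: le_imp_less_Suc member_le_sum)
  let ?A = "\<lambda>n. inv_into (nts C) f (n - N)"
  define \<sigma> :: "nat \<times> nat \<Rightarrow> 'n option" where
    "\<sigma> v = (if N \<le> snd v \<and> snd v - N \<in> f ` nts C \<and> \<rho> (?A (snd v)) = fst v
       then Some (?A (snd v)) else None)" for v
  have "\<forall>v A. \<sigma> v = Some A \<longrightarrow> \<rho> A = fst v"
    by (simp add: \<sigma>_def)
  moreover have "subst \<sigma> (abstract_nts \<rho> (\<lambda>A. N + f A) C) = C"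
    using f N by (intro subst_abstract_nts) (auto simp: \<sigma>_def)
  moreover have "fst ` vars (abstract_nts \<rho> (\<lambda>A. N + f A) C) \<subseteq> fst ` vars C \<union> \<rho> ` nts C"
    using abstract_nts_props(4)[of \<rho> "\<lambda>A. N + f A" C] by auto
  ultimately show thesis
    by (intro that[of \<sigma> "abstract_nts \<rho> (\<lambda>A. N + f A) C"]) (simp_all add: abstract_nts_props)
qed

theorem lemma2:
  fixes \<rho> :: "'n \<Rightarrow> nat" and k :: nat and C :: "('a::finite, 'n) mc"
  assumes "k_essential \<rho> k C"
  shows "\<exists>C'. k_correct \<rho> k C' \<and> mc_equiv \<rho> C C'"
proof -
  obtain \<sigma> D where \<sigma>: "\<forall>v A. \<sigma> v = Some A \<longrightarrow> \<rho> A = fst v" and C: "subst \<sigma> D = C"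
    and D: "ground D" "rk \<rho> D = rk \<rho> C" "wf_mc \<rho> D = wf_mc \<rho> C"
      "fst ` vars D \<subseteq> fst ` vars C \<union> \<rho> ` nts C"
    by (rule obtain_ground_abstraction)
  have "fst v \<le> k" if "v \<in> vars D" for v
  proof -
    have "fst v \<in> fst ` vars C \<union> \<rho> ` nts C"
      using D(4) that by blast
    then show ?thesis
      using assms by (auto simp: k_essential_def)
  qed
  moreover have "wf_mc \<rho> D" "rk \<rho> D \<le> k"
    using assms D(2,3) by (simp_all add: k_essential_def)
  ultimately obtain D' where "k_correct \<rho> k D'" "ground_equiv \<rho> D D'"
    using ground_equiv_k_correct[OF D(1)] by blast
  moreover from this(2) have "mc_equiv \<rho> C (subst \<sigma> D')"
    unfolding mc_equiv_def using \<sigma> C by blast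
  ultimately show ?thesis
    using k_correct_subst[OF \<sigma>] by blast
qed

end
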